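(* In the Haechi protocol (described in the context), consider any ordering cycle of the beacon chain. The block timestamp of any in-flight CrossLink is larger than the block timestamps of all CrossLinks that are ordered in the current ordering cycle.
   Context: Setting (Haechi). A sharded blockchain has shards $S_1,\dots,S_m$; shard $S_i$ maintains a chain $SC_i=\{SC_i^1,SC_i^2,\dots\}$ of blocks, where $SC_i^h$ is the block at height $h$. Each block carries a block timestamp, fixed by the shard's intra-shard BFT consensus, and block timestamps are strictly increasing in block height within each shard. A beacon shard $S_0$ maintains a beacon chain. Transactions calling order-sensitive contracts are called OTXs. Processing phase: when shard $S_i$ handles its block at height $h$, it collects the valid new OTXs of that block, in their in-block order, into a list $L_{tx}$ and sends to the beacon chain (with a quorum certificate) a CrossLink $CL=\langle blockTS, L_{tx}, i, h\rangle$, where $blockTS$ is the block's timestamp. Ordering phase (finalization fairness algorithm): for each shard $i$ the beacon chain keeps a sequence $shardCLs[i]$ of received CrossLinks of $S_i$ with consecutive block heights; a received CrossLink whose height is exactly one more than the height of the last element of $shardCLs[i]$ is appended, together with any buffered CrossLinks of $S_i$ that then continue the consecutive sequence; a CrossLink whose height exceeds that by more than one is buffered in a pool. $shardLastTS[i]$ is the block timestamp of the last CrossLink in $shardCLs[i]$. An ordering cycle is triggered once $shardCLs[i]$ contains at least one CrossLink for every $i$; the beacon chain then selects all CrossLinks in $shardCLs$ with $blockTS\le \min_{1\le i\le m} shardLastTS[i]$, and orders their OTXs: OTXs in a CrossLink with smaller block timestamp first, and within the same CrossLink by smaller index first. This order is agreed by one instance of the beacon shard's BFT consensus and is then used by the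 contract shards to execute the transactions. An in-flight CrossLink is a CrossLink of some shard that has not yet been received by the beacon chain (its block is still being processed or the CrossLink is still in transit). *)

theory Defs
  imports Complex_Main
begin

text \<open>A CrossLink is identified by its shard index i and block height h (heights start at 1);
  its block timestamp is ts i h.  The beacon state consists of, per shard,
  the list of heights currently in shardCLs[i] and the set of buffered (pooled) heights.\<close>

type_synonym bstate = "(nat \<Rightarrow> nat list) \<times> (nat \<Rightarrow> nat set)"

definition lastH :: "nat list \<Rightarrow> nat" where
  "lastH xs = (if xs = [] then 0 else last xs)"

text \<open>Append buffered CrossLinks that continue the consecutive sequence (fuel bounds the loop).\<close>
fun drain :: "nat \<Rightarrow> nat set \<Rightarrow> nat list \<Rightarrow> nat list" where
  "drain 0 P xs = xs"
| "drain (Suc n) P xs =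
     (if Suc (lastH xs) \<in> P then drain n P (xs @ [Suc (lastH xs)]) else xs)"

definition recv :: "nat \<times> nat \<Rightarrow> bstate \<Rightarrow> bstate" where
  "recv c s = (case c of (i, h) \<Rightarrow> case s of (cls, pool) \<Rightarrow>
     if h = Suc (lastH (cls i)) then
       (let xs' = drain (card (pool i)) (pool i) (cls i @ [h])
        in (cls(i := xs'), pool(i := {x \<in> pool i. lastH xs' < x})))
     else if Suc (lastH (cls i)) < h then (cls, pool(i := insert h (pool i)))
     else (cls, pool))"

definition init_state :: bstate where
  "init_state = (\<lambda>_. [], \<lambda>_. {})"

definition beacon_state :: "(nat \<times> nat) list \<Rightarrow> bstate" where
  "beacon_state arr = foldl (\<lambda>s c. recv c s) init_state arr"

definition shardCLs :: "(nat \<times> nat) list \<Rightarrow> nat \<Rightarrow> nat list" where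
  "shardCLs arr i = fst (beacon_state arr) i"

definition shardLastTS :: "(nat \<Rightarrow> nat \<Rightarrow> real) \<Rightarrow> (nat \<times> nat) list \<Rightarrow> nat \<Rightarrow> real" where
  "shardLastTS ts arr i = ts i (last (shardCLs arr i))"

definition cycle_triggered :: "nat \<Rightarrow> (nat \<times> nat) list \<Rightarrow> bool" where
  "cycle_triggered m arr = (\<forall>i\<in>{1..m}. shardCLs arr i \<noteq> [])"

definition ordered_in_cycle ::
  "nat \<Rightarrow> (nat \<Rightarrow> nat \<Rightarrow> real) \<Rightarrow> (nat \<times> nat) list \<Rightarrow> (nat \<times> nat) set" where
  "ordered_in_cycle m ts arr =
     {(i, h). i \<in> {1..m} \<and> h \<in> set (shardCLs arr i) \<and>
              ts i h \<le> Min ((shardLastTS ts arr) ` {1..m})}"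

definition in_flight :: "nat \<Rightarrow> (nat \<times> nat) list \<Rightarrow> (nat \<times> nat) set" where
  "in_flight m arr = {(j, h). j \<in> {1..m} \<and> 1 \<le> h \<and> (j, h) \<notin> set arr}"

end

theory Submission
  imports Defs
begin

text \<open>The beacon chain keeps shardCLs[j] equal to the heights 1, ..., k of CrossLinks it has
  already received.  An in-flight CrossLink of shard j therefore has height above k, so by
  monotonicity of block timestamps within shard j its timestamp exceeds shardLastTS[j], which
  bounds every timestamp selected in the cycle.\<close>

lemma lastH_snoc [simp]: "lastH (xs @ [x]) = x"
  by (simp add: lastH_def)

definition consecutive_heights :: "nat list \<Rightarrow> bool" where
  "consecutive_heights xs \<longleftrightarrow> set xs = {1..lastH xs}"

lemma consecutive_heights_Nil [simp]: "consecutive_heights []"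
  by (simp add: consecutive_heights_def lastH_def)

lemma consecutive_heights_snoc:
  "consecutive_heights xs \<Longrightarrow> consecutive_heights (xs @ [Suc (lastH xs)])"
  by (auto simp: consecutive_heights_def)

lemma consecutive_heights_drain:
  "consecutive_heights xs \<Longrightarrow> consecutive_heights (drain n P xs)"
  by (induction n arbitrary: xs) (simp_all add: consecutive_heights_snoc)

lemma set_drain_subset: "set (drain n P xs) \<subseteq> set xs \<union> P"
proof (induction n arbitrary: xs)
  case 0
  then show ?case by simp
next
  case (Suc n)
  then show ?case using Suc.IH[of "xs @ [Suc (lastH xs)]"] by auto
qed

lemma fst_recv:
  "fst (recv (i, h) (cls, pool)) =
     (if h = Suc (lastH (cls i)) then cls(i := drain (card (pool i)) (pool i) (cls i @ [h])) else cls)"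
  by (simp add: recv_def Let_def)

lemma recv_heights_subset:
  assumes "x \<in> set (fst (recv c s) k) \<union> snd (recv c s) k"
  shows "x \<in> set (fst s k) \<union> snd s k \<or> (k, x) = c"
proof -
  obtain cls pool i h where s: "s = (cls, pool)" and c: "c = (i, h)"
    by (cases s, cases c) auto
  show ?thesis
    using assms set_drain_subset[of "card (pool i)" "pool i" "cls i @ [h]"]
    by (auto simp: s c recv_def Let_def split: if_splits)
qed

lemma recv_consecutive_heights:
  assumes "\<forall>k. consecutive_heights (fst s k)"
  shows "consecutive_heights (fst (recv c s) k)"
proof -
  obtain cls pool i h where s: "s = (cls, pool)" and c: "c = (i, h)"
    by (cases s, cases c) auto
  have "consecutive_heights (drain n P (cls i @ [Suc (lastH (cls i))]))" for n P
    using assms by (simp add: s consecutive_heights_drain consecutive_heights_snoc)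
  then show ?thesis
    using assms by (simp add: s c fst_recv)
qed

definition heights_received :: "(nat \<times> nat) list \<Rightarrow> bstate \<Rightarrow> bool" where
  "heights_received arr s \<longleftrightarrow> (\<forall>k. \<forall>x \<in> set (fst s k) \<union> snd s k. (k, x) \<in> set arr)"

lemma recv_heights_received:
  assumes "heights_received arr s"
  shows "heights_received (arr @ [c]) (recv c s)"
  unfolding heights_received_def
proof (intro allI ballI)
  fix k x
  assume "x \<in> set (fst (recv c s) k) \<union> snd (recv c s) k"
  from recv_heights_subset[OF this] show "(k, x) \<in> set (arr @ [c])"
    using assms by (auto simp: heights_received_def)
qed

lemma beacon_state_invariant:
  assumes "Q [] init_state"
    and "\<And>arr c s. Q arr s \<Longrightarrow> Q (arr @ [c]) (recv c s)"
  shows "Q arr (beacon_state arr)"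
proof (induction arr rule: rev_induct)
  case Nil
  then show ?case using assms(1) by (simp add: beacon_state_def)
next
  case (snoc c arr)
  then show ?case using assms(2) by (simp add: beacon_state_def)
qed

lemma shardCLs_consecutive: "consecutive_heights (shardCLs arr i)"
proof -
  have "\<forall>k. consecutive_heights (fst (beacon_state arr) k)"
    by (rule beacon_state_invariant) (simp_all add: init_state_def recv_consecutive_heights)
  then show ?thesis by (simp add: shardCLs_def)
qed

lemma shardCLs_received: "x \<in> set (shardCLs arr i) \<Longrightarrow> (i, x) \<in> set arr"
proof -
  have "heights_received arr (beacon_state arr)"
  proof (rule beacon_state_invariant)
    show "heights_received [] init_state"
      by (simp add: heights_received_def init_state_def)
  qed (rule recv_heights_received)
  then show "x \<in> set (shardCLs arr i) \<Longrightarrow> (i, x) \<in> set arr"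
    by (simp add: heights_received_def shardCLs_def)
qed

lemma last_shardCLs_less_unreceived:
  assumes "shardCLs arr j \<noteq> []" and "1 \<le> h" and "(j, h) \<notin> set arr"
  shows "last (shardCLs arr j) < h"
proof -
  have "h \<notin> set (shardCLs arr j)"
    using shardCLs_received assms(3) by blast
  then have "\<not> h \<le> lastH (shardCLs arr j)"
    using shardCLs_consecutive[of arr j] assms(2) by (simp add: consecutive_heights_def)
  with assms(1) show ?thesis by (simp add: lastH_def)
qed

theorem lemma1:
  fixes m :: nat and ts :: "nat \<Rightarrow> nat \<Rightarrow> real" and arr :: "(nat \<times> nat) list"
  assumes "1 \<le> m"
    and "\<forall>i\<in>{1..m}. strict_mono (ts i)"
    and "\<forall>(i, h)\<in>set arr. i \<in> {1..m} \<and> 1 \<le> h"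
    and "cycle_triggered m arr"
    and "(i, h) \<in> ordered_in_cycle m ts arr"
    and "(j, h') \<in> in_flight m arr"
  shows "ts i h < ts j h'"
proof -
  have j: "j \<in> {1..m}" "1 \<le> h'" "(j, h') \<notin> set arr"
    using assms(6) by (auto simp: in_flight_def)
  have "shardCLs arr j \<noteq> []"
    using assms(4) j(1) by (auto simp: cycle_triggered_def)
  then have "shardLastTS ts arr j < ts j h'"
    using last_shardCLs_less_unreceived[OF _ j(2,3)] assms(2) j(1)
    by (auto simp: shardLastTS_def strict_mono_def)
  moreover have "Min (shardLastTS ts arr ` {1..m}) \<le> shardLastTS ts arr j"
    using j(1) by (intro Min_le) auto
  moreover have "ts i h \<le> Min (shardLastTS ts arr ` {1..m})"
    using assms(5) by (auto simp: ordered_in_cycle_def)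
  ultimately show ?thesis by linarith
qed

end
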